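(* Let $N$ be an even integer. Then: (1) if $N \geq 6$, $f(N,\frac{N}{2}) = \frac{N^2}{4}+3$; (2) if $N \geq 10$, $f(N,\frac{N}{2}+1) > f(N,\frac{N}{2})$.
   Context: All graphs are finite and simple; $L(G)$ is the line graph of $G$; $e(\cdot)$, $\Delta(\cdot)$, $\delta(\cdot)$ denote number of edges, maximum degree and minimum degree. For integers $N \ge \Delta \ge 1$, $f(N,\Delta) = \max\{ e(L(G)) : e(G)=N, \Delta(G)=\Delta, \delta(G)\geq 1\}$, the maximum over all simple graphs $G$. *)

theory Defs
  imports Main
begin

text \<open>A finite simple graph without isolated vertices is represented by its edge set:
  a finite set of 2-element vertex sets; its vertex set is the union of its edges
  (this encodes the condition minimum degree at least 1). Vertices are natural numbers;
  every finite graph is isomorphic to one on natural numbers.\<close>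

definition simple_graph :: "nat set set \<Rightarrow> bool" where
  "simple_graph E \<longleftrightarrow> finite E \<and> (\<forall>e\<in>E. card e = 2)"

definition verts :: "nat set set \<Rightarrow> nat set" where
  "verts E = \<Union>E"

definition degree :: "nat set set \<Rightarrow> nat \<Rightarrow> nat" where
  "degree E v = card {e\<in>E. v \<in> e}"

definition max_degree :: "nat set set \<Rightarrow> nat" where
  "max_degree E = Max (degree E ` verts E)"

definition min_degree :: "nat set set \<Rightarrow> nat" where
  "min_degree E = Min (degree E ` verts E)"

definition line_graph_edges :: "nat set set \<Rightarrow> nat" where
  "line_graph_edges E = card {{e1, e2} | e1 e2. e1 \<in> E \<and> e2 \<in> E \<and> e1 \<noteq> e2 \<and> e1 \<inter> e2 \<noteq> {}}"

definition f :: "nat \<Rightarrow> nat \<Rightarrow> nat" where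
  "f N D = Max {line_graph_edges E | E. simple_graph E \<and> card E = N \<and> max_degree E = D
                                        \<and> min_degree E \<ge> 1}"

end

theory Submission
  imports Defs
begin

text \<open>Counting the pairs of adjacent edges at their common vertex gives
  \<open>2 e(L(G)) = \<Sum>\<^sub>v d(v) (d(v) - 1)\<close>. Let \<open>G\<close> have \<open>2k\<close> edges and maximum degree \<open>k\<close>,
  attained at \<open>x\<close>. If all other degrees are at most 3, the sum is at most \<open>k(k - 1) + 2 \<cdot> 3k\<close>.
  Otherwise pick a second vertex \<open>y\<close> of degree \<open>t \<ge> 4\<close> and let \<open>B\<close> be the \<open>s\<close> edges avoiding
  \<open>x\<close> and \<open>y\<close>, so that \<open>s + t = k + [xy \<in> E]\<close>. Every other vertex \<open>v\<close> has, besides its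
  \<open>B\<close>-edges, at most the edges \<open>vx\<close> and \<open>vy\<close>, which bounds its term by
  \<open>2[vy \<in> E] + d\<^sub>B(v)(d\<^sub>B(v) - 1) + 4 d\<^sub>B(v)\<close>; summing, and using that \<open>B\<close> has at most
  \<open>s(s - 1)/2\<close> adjacent pairs, again gives \<open>e(L(G)) \<le> k\<^sup>2 + 3\<close>.
  Equality holds for the book of \<open>k - 1\<close> triangles on the spine \<open>{0, 1}\<close> plus the chord
  \<open>{2, 3}\<close>, while for maximum degree \<open>k + 1\<close> the same book with one pendant edge at \<open>0\<close>
  already has \<open>k\<^sup>2 + k - 1\<close> line-graph edges.\<close>

lemma two_times_choose_two: "2 * (n choose 2) = n * (n - 1)"
proof -
  have "even (n * (n - 1))" by (cases "even n") auto
  then show ?thesis unfolding choose_two by (rule dvd_mult_div_cancel)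
qed

lemma simple_graph_finite: "simple_graph E \<Longrightarrow> finite E"
  by (simp add: simple_graph_def)

lemma simple_graph_edgeE:
  assumes "simple_graph E" "e \<in> E"
  obtains a b where "a \<noteq> b" "e = {a, b}"
  using assms by (auto simp: simple_graph_def card_2_iff)

lemma simple_graph_subset: "simple_graph E \<Longrightarrow> F \<subseteq> E \<Longrightarrow> simple_graph F"
  unfolding simple_graph_def by (auto intro: finite_subset)

lemma simple_graph_insert: "simple_graph E \<Longrightarrow> card e = 2 \<Longrightarrow> simple_graph (insert e E)"
  unfolding simple_graph_def by simp

lemma finite_verts: "simple_graph E \<Longrightarrow> finite (verts E)"
  unfolding verts_def simple_graph_def by (auto intro!: finite_Union intro: card_ge_0_finite)

lemma verts_nonempty:
  assumes "simple_graph E" "E \<noteq> {}"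
  shows "verts E \<noteq> {}"
proof -
  obtain e where "e \<in> E" using assms(2) by blast
  then obtain a b where "e = {a, b}" using assms(1) by (auto elim: simple_graph_edgeE)
  with \<open>e \<in> E\<close> show ?thesis unfolding verts_def by blast
qed

lemma in_verts_if_degree_pos: "0 < degree E v \<Longrightarrow> v \<in> verts E"
  unfolding degree_def verts_def by (auto simp: card_gt_0_iff)

lemma degree_insert:
  assumes "finite E" "e \<notin> E"
  shows "degree (insert e E) v = degree E v + of_bool (v \<in> e)"
proof -
  have "{x \<in> insert e E. v \<in> x} = (if v \<in> e then insert e {x \<in> E. v \<in> x} else {x \<in> E. v \<in> x})"
    by auto
  then show ?thesis using assms unfolding degree_def by simp
qed

lemma degree_split:
  assumes "finite E"
  shows "degree E v = degree {e\<in>E. P e} v + degree {e\<in>E. \<not> P e} v"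
proof -
  have "{e\<in>E. v \<in> e} = {e\<in>{e\<in>E. P e}. v \<in> e} \<union> {e\<in>{e\<in>E. \<not> P e}. v \<in> e}" by blast
  then show ?thesis
    unfolding degree_def using assms by (simp add: card_Un_disjoint disjoint_iff)
qed

lemma card_edges_joining_le_1:
  assumes "simple_graph E" "x \<noteq> y"
  shows "card {e\<in>E. x \<in> e \<and> y \<in> e} \<le> 1"
proof -
  have "{e\<in>E. x \<in> e \<and> y \<in> e} \<subseteq> {{x, y}}"
    using assms by (auto elim: simple_graph_edgeE)
  then show ?thesis using card_mono[of "{{x, y}}"] by fastforce
qed

lemma card_edges_avoiding_both:
  assumes "finite E"
  shows "card {e\<in>E. x \<notin> e \<and> y \<notin> e} + degree E x + degree E y
       = card E + card {e\<in>E. x \<in> e \<and> y \<in> e}"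
proof -
  have degrees: "degree E x + degree E y
      = card {e\<in>E. x \<in> e \<or> y \<in> e} + card {e\<in>E. x \<in> e \<and> y \<in> e}"
    unfolding degree_def using card_Un_Int[of "{e\<in>E. x \<in> e}" "{e\<in>E. y \<in> e}"] assms
    by (simp add: Collect_disj_eq Collect_conj_eq Int_assoc Int_left_commute Int_Un_distrib)
  have "card E = card ({e\<in>E. x \<notin> e \<and> y \<notin> e} \<union> {e\<in>E. x \<in> e \<or> y \<in> e})"
    by (rule arg_cong[where f = card]) blast
  also have "\<dots> = card {e\<in>E. x \<notin> e \<and> y \<notin> e} + card {e\<in>E. x \<in> e \<or> y \<in> e}"
    by (rule card_Un_disjoint) (use assms in auto)
  finally show ?thesis using degrees by linarith
qed

lemma sum_degree_eq:
  assumes "simple_graph E" "finite W" "verts E \<subseteq> W"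
  shows "(\<Sum>v\<in>W. degree E v) = 2 * card E"
proof -
  have "(\<Sum>v\<in>W. degree E v) = (\<Sum>v\<in>W. \<Sum>e\<in>E. of_bool (v \<in> e))"
    unfolding degree_def using simple_graph_finite[OF assms(1)] by (simp add: Int_def)
  also have "\<dots> = (\<Sum>e\<in>E. card (W \<inter> e))"
    using assms(2) by (subst sum.swap) (simp add: Int_def)
  also have "\<dots> = (\<Sum>e\<in>E. 2)"
  proof (rule sum.cong)
    fix e assume "e \<in> E"
    then have "e \<subseteq> W" "card e = 2" using assms by (auto simp: verts_def simple_graph_def)
    then show "card (W \<inter> e) = 2" by (simp add: Int_absorb1)
  qed simp
  finally show ?thesis by simp
qed

lemma line_graph_edges_eq_sum_choose:
  assumes "simple_graph E" "finite W" "verts E \<subseteq> W"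
  shows "line_graph_edges E = (\<Sum>v\<in>W. degree E v choose 2)"
proof -
  define P where "P v = {X. X \<subseteq> {e\<in>E. v \<in> e} \<and> card X = 2}" for v
  have pairs_eq: "{{e1, e2} | e1 e2. e1 \<in> E \<and> e2 \<in> E \<and> e1 \<noteq> e2 \<and> e1 \<inter> e2 \<noteq> {}} = (\<Union>v\<in>W. P v)"
  proof (intro set_eqI iffI)
    fix X assume "X \<in> {{e1, e2} | e1 e2. e1 \<in> E \<and> e2 \<in> E \<and> e1 \<noteq> e2 \<and> e1 \<inter> e2 \<noteq> {}}"
    then obtain e1 e2 v where X: "X = {e1, e2}" "e1 \<in> E" "e2 \<in> E" "e1 \<noteq> e2" "v \<in> e1" "v \<in> e2"
      by blast
    then have "v \<in> W" using assms(3) by (auto simp: verts_def)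
    with X show "X \<in> (\<Union>v\<in>W. P v)" by (auto simp: P_def)
  next
    fix X assume "X \<in> (\<Union>v\<in>W. P v)"
    then obtain v where "X \<subseteq> {e\<in>E. v \<in> e}" "card X = 2" by (auto simp: P_def)
    moreover from \<open>card X = 2\<close> obtain e1 e2 where "X = {e1, e2}" "e1 \<noteq> e2"
      unfolding card_2_iff by blast
    ultimately show "X \<in> {{e1, e2} | e1 e2. e1 \<in> E \<and> e2 \<in> E \<and> e1 \<noteq> e2 \<and> e1 \<inter> e2 \<noteq> {}}"
      by blast
  qed
  have P_disjoint: "P v \<inter> P w = {}" if "v \<noteq> w" for v w
  proof (rule ccontr)
    assume "P v \<inter> P w \<noteq> {}"
    then obtain X where "X \<subseteq> {e\<in>E. v \<in> e \<and> w \<in> e}" "card X = 2"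
      unfolding P_def by blast
    moreover have "finite {e\<in>E. v \<in> e \<and> w \<in> e}" using simple_graph_finite[OF assms(1)] by simp
    ultimately have "2 \<le> card {e\<in>E. v \<in> e \<and> w \<in> e}" by (metis card_mono)
    then show False using card_edges_joining_le_1[OF assms(1) \<open>v \<noteq> w\<close>] by simp
  qed
  have card_P: "card (P v) = degree E v choose 2" for v
    unfolding P_def degree_def by (rule n_subsets) (use simple_graph_finite[OF assms(1)] in simp)
  have "line_graph_edges E = card (\<Union>v\<in>W. P v)" unfolding line_graph_edges_def pairs_eq ..
  also have "\<dots> = (\<Sum>v\<in>W. card (P v))"
    by (rule card_UN_disjoint)
      (use assms(2) simple_graph_finite[OF assms(1)] P_disjoint in \<open>auto simp: P_def\<close>)
  finally show ?thesis by (simp add: card_P)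
qed

lemma two_line_graph_edges_eq_sum:
  assumes "simple_graph E" "finite W" "verts E \<subseteq> W"
  shows "2 * line_graph_edges E = (\<Sum>v\<in>W. degree E v * (degree E v - 1))"
  using line_graph_edges_eq_sum_choose[OF assms] by (simp add: sum_distrib_left two_times_choose_two)

lemma sum_degree_le_two_line_graph_edges:
  assumes "simple_graph E" "finite S"
  shows "(\<Sum>v\<in>S. degree E v * (degree E v - 1)) \<le> 2 * line_graph_edges E"
proof -
  have "finite (S \<union> verts E)" using assms finite_verts by simp
  then have "(\<Sum>v\<in>S. degree E v * (degree E v - 1)) \<le> (\<Sum>v\<in>S \<union> verts E. degree E v * (degree E v - 1))"
    by (rule sum_mono2) auto
  also have "\<dots> = 2 * line_graph_edges E"
    using two_line_graph_edges_eq_sum[OF assms(1) \<open>finite (S \<union> verts E)\<close>] by simp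
  finally show ?thesis .
qed

lemma line_graph_edges_le_choose:
  assumes "simple_graph E"
  shows "line_graph_edges E \<le> card E choose 2"
proof -
  have "{{e1, e2} | e1 e2. e1 \<in> E \<and> e2 \<in> E \<and> e1 \<noteq> e2 \<and> e1 \<inter> e2 \<noteq> {}}
      \<subseteq> {X. X \<subseteq> E \<and> card X = 2}"
    by (auto simp: card_insert_if)
  then have "line_graph_edges E \<le> card {X. X \<subseteq> E \<and> card X = 2}"
    unfolding line_graph_edges_def by (rule card_mono[rotated]) (simp add: simple_graph_finite[OF assms])
  also have "\<dots> = card E choose 2" by (rule n_subsets[OF simple_graph_finite[OF assms]])
  finally show ?thesis .
qed

lemma degree_le_max_degree:
  assumes "simple_graph E"
  shows "degree E v \<le> max_degree E"
proof (cases "v \<in> verts E")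
  case True
  then show ?thesis unfolding max_degree_def by (simp add: finite_verts[OF assms])
next
  case False
  then have "degree E v = 0" using in_verts_if_degree_pos by blast
  then show ?thesis by simp
qed

lemma max_degree_attained:
  assumes "simple_graph E" "E \<noteq> {}"
  obtains v where "degree E v = max_degree E"
proof -
  have "max_degree E \<in> degree E ` verts E"
    unfolding max_degree_def using finite_verts[OF assms(1)] verts_nonempty[OF assms] by simp
  then show ?thesis using that by (metis imageE)
qed

lemma max_degree_eqI:
  assumes "simple_graph E" "degree E v = D" "0 < D" "\<And>w. degree E w \<le> D"
  shows "max_degree E = D"
  unfolding max_degree_def
proof (rule Max_eqI)
  show "D \<in> degree E ` verts E" using assms(2,3) in_verts_if_degree_pos by blast
qed (use assms finite_verts in auto)

lemma min_degree_ge_1: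
  assumes "simple_graph E" "E \<noteq> {}"
  shows "1 \<le> min_degree E"
proof -
  have "min_degree E \<in> degree E ` verts E"
    unfolding min_degree_def using finite_verts[OF assms(1)] verts_nonempty[OF assms] by simp
  then obtain v where "v \<in> verts E" "min_degree E = degree E v" by blast
  moreover from \<open>v \<in> verts E\<close> have "0 < degree E v"
    using simple_graph_finite[OF assms(1)] by (auto simp: verts_def degree_def card_gt_0_iff)
  ultimately show ?thesis by simp
qed

definition admissible :: "nat \<Rightarrow> nat \<Rightarrow> nat set set \<Rightarrow> bool" where
  "admissible N D E \<longleftrightarrow> simple_graph E \<and> card E = N \<and> max_degree E = D \<and> min_degree E \<ge> 1"

lemma f_eq_Max: "f N D = Max {line_graph_edges E | E. admissible N D E}"
  unfolding f_def admissible_def ..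

lemma finite_line_graph_edges_admissible: "finite {line_graph_edges E | E. admissible N D E}"
  by (rule finite_subset[of _ "{..N choose 2}"])
    (auto simp: admissible_def dest: line_graph_edges_le_choose)

lemma line_graph_edges_le_f: "admissible N D E \<Longrightarrow> line_graph_edges E \<le> f N D"
  unfolding f_eq_Max by (rule Max_ge[OF finite_line_graph_edges_admissible]) blast

lemma f_le:
  assumes "admissible N D E\<^sub>0" "\<And>E. admissible N D E \<Longrightarrow> line_graph_edges E \<le> c"
  shows "f N D \<le> c"
  unfolding f_eq_Max using assms
  by (subst Max_le_iff[OF finite_line_graph_edges_admissible]) auto

lemma off_hub_arith:
  fixes a b c :: nat
  assumes "a \<le> 1 + c" "c \<le> 1"
  shows "(a + b) * (a + b - 1) \<le> 2 * c + b * (b - 1) + 4 * b"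
proof -
  from assms consider "a = 0" | "a = 1" | "a = 2" "c = 1" by linarith
  then show ?thesis by cases (cases b; simp add: algebra_simps)+
qed

lemma one_hub_arith:
  fixes k :: nat
  assumes "3 \<le> k"
  shows "k * (k - 1) + 2 * (4 * k - k) \<le> 2 * k\<^sup>2 + 6"
proof -
  obtain u where k: "k = u + 3" using assms by (metis add.commute le_Suc_ex)
  show ?thesis by (simp add: k power2_eq_square algebra_simps)
qed

lemma two_hub_arith:
  fixes k t s m :: nat
  assumes "4 \<le> t" "t \<le> k" "m \<le> 1" "s + t = k + m"
  shows "k * (k - 1) + t * (t - 1) + 2 * (t - m) + s * (s - 1) + 8 * s \<le> 2 * k\<^sup>2 + 6"
proof -
  obtain u j where t: "t = u + 4" and k: "k = u + 4 + j"
    using assms(1,2) by (metis add.commute le_Suc_ex)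
  from assms(3,4) consider "m = 0" "s = j" | "m = 1" "s = j + 1"
    unfolding t k by linarith
  then show ?thesis
    by cases (simp_all add: t k power2_eq_square algebra_simps)
qed

lemma degree_off_two_hubs:
  assumes "simple_graph E" "v \<noteq> x" "v \<noteq> y"
  defines "B \<equiv> {e\<in>E. x \<notin> e \<and> y \<notin> e}"
  shows "degree E v * (degree E v - 1)
       \<le> 2 * degree {e\<in>E. y \<in> e} v + degree B v * (degree B v - 1) + 4 * degree B v"
proof -
  have fin: "finite E" using assms(1) by (rule simple_graph_finite)
  define A where "A = {e\<in>E. \<not> (x \<notin> e \<and> y \<notin> e)}"
  have split: "degree E v = degree B v + degree A v"
    unfolding A_def B_def by (rule degree_split[OF fin])
  have "{e\<in>A. v \<in> e} = {e\<in>{e\<in>E. x \<in> e}. v \<in> e} \<union> {e\<in>{e\<in>E. y \<in> e}. v \<in> e}"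
    unfolding A_def by blast
  then have "degree A v \<le> degree {e\<in>E. x \<in> e} v + degree {e\<in>E. y \<in> e} v"
    unfolding degree_def by (simp only: card_Un_le)
  moreover have degree_hub_le_1: "degree {e\<in>E. z \<in> e} v \<le> 1" if "z \<noteq> v" for z
  proof -
    have "{e\<in>{e\<in>E. z \<in> e}. v \<in> e} = {e\<in>E. v \<in> e \<and> z \<in> e}" by blast
    then show ?thesis
      unfolding degree_def using card_edges_joining_le_1[OF assms(1) \<open>z \<noteq> v\<close>[symmetric]] by simp
  qed
  ultimately have "degree A v \<le> 1 + degree {e\<in>E. y \<in> e} v"
    using assms(2) by fastforce
  from off_hub_arith[OF this degree_hub_le_1] show ?thesis
    unfolding split add.commute[of "degree B v"] using assms(3) by simp
qed

lemma sum_degree_off_two_hubs_le: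
  assumes "simple_graph E" "x \<noteq> y"
  defines "B \<equiv> {e\<in>E. x \<notin> e \<and> y \<notin> e}" and "m \<equiv> card {e\<in>E. x \<in> e \<and> y \<in> e}"
  shows "(\<Sum>v\<in>verts E - {x, y}. degree E v * (degree E v - 1))
       \<le> 2 * (degree E y - m) + card B * (card B - 1) + 8 * card B"
proof -
  define Y where "Y = {e\<in>E. y \<in> e}"
  define R where "R = verts E - {x, y}"
  define W where "W = insert x (insert y R)"
  have "finite R" unfolding R_def using finite_verts[OF assms(1)] by simp
  then have "finite W" unfolding W_def by simp
  have sum_W: "(\<Sum>v\<in>W. g v) = g x + g y + (\<Sum>v\<in>R. g v)" for g :: "nat \<Rightarrow> nat"
    using \<open>finite R\<close> assms(2) unfolding W_def by (simp add: R_def)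
  have B: "simple_graph B" "verts B \<subseteq> W" and Y: "simple_graph Y" "verts Y \<subseteq> W"
    using simple_graph_subset[OF assms(1)] unfolding B_def Y_def W_def R_def
    by (auto simp: verts_def)
  have "{e\<in>B. x \<in> e} = {}" "{e\<in>B. y \<in> e} = {}" unfolding B_def by auto
  then have "degree B x = 0" "degree B y = 0" unfolding degree_def by (simp only: card.empty)+
  then have sum_B: "(\<Sum>v\<in>R. degree B v) = 2 * card B"
    and sum_B2: "(\<Sum>v\<in>R. degree B v * (degree B v - 1)) = 2 * line_graph_edges B"
    unfolding sum_degree_eq[OF B(1) \<open>finite W\<close> B(2), symmetric]
      two_line_graph_edges_eq_sum[OF B(1) \<open>finite W\<close> B(2)] sum_W
    by simp_all
  have "{e\<in>Y. y \<in> e} = Y" "{e\<in>Y. x \<in> e} = {e\<in>E. x \<in> e \<and> y \<in> e}"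
    unfolding Y_def by blast+
  then have "degree Y y = degree E y" "degree Y x = m" "card Y = degree E y"
    unfolding m_def degree_def by (simp_all add: Y_def)
  then have sum_Y: "(\<Sum>v\<in>R. degree Y v) = degree E y - m"
    using sum_W[of "degree Y"] sum_degree_eq[OF Y(1) \<open>finite W\<close> Y(2)] by simp
  have "2 * line_graph_edges B \<le> card B * (card B - 1)"
    using line_graph_edges_le_choose[OF B(1)] two_times_choose_two[of "card B"] by simp
  moreover have "(\<Sum>v\<in>R. degree E v * (degree E v - 1))
      \<le> (\<Sum>v\<in>R. 2 * degree Y v + degree B v * (degree B v - 1) + 4 * degree B v)"
  proof (rule sum_mono)
    fix v assume "v \<in> R"
    then show "degree E v * (degree E v - 1)
        \<le> 2 * degree Y v + degree B v * (degree B v - 1) + 4 * degree B v"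
      unfolding Y_def B_def by (intro degree_off_two_hubs[OF assms(1)]) (auto simp: R_def)
  qed
  ultimately show ?thesis
    unfolding R_def[symmetric]
    by (simp add: sum.distrib sum_distrib_left[symmetric] sum_Y sum_B sum_B2 del: One_nat_def)
qed

lemma two_line_graph_edges_le_two_hubs:
  assumes "simple_graph E" "x \<noteq> y"
  defines "B \<equiv> {e\<in>E. x \<notin> e \<and> y \<notin> e}" and "m \<equiv> card {e\<in>E. x \<in> e \<and> y \<in> e}"
  shows "2 * line_graph_edges E \<le> degree E x * (degree E x - 1) + degree E y * (degree E y - 1)
           + 2 * (degree E y - m) + card B * (card B - 1) + 8 * card B"
proof -
  define R where "R = verts E - {x, y}"
  define W where "W = insert x (insert y R)"
  have "finite R" unfolding R_def using finite_verts[OF assms(1)] by simp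
  then have "finite W" "verts E \<subseteq> W" unfolding W_def R_def by auto
  have "(\<Sum>v\<in>W. g v) = g x + g y + (\<Sum>v\<in>R. g v)" for g :: "nat \<Rightarrow> nat"
    using \<open>finite R\<close> assms(2) unfolding W_def by (simp add: R_def)
  then have "2 * line_graph_edges E = degree E x * (degree E x - 1) + degree E y * (degree E y - 1)
      + (\<Sum>v\<in>R. degree E v * (degree E v - 1))"
    using two_line_graph_edges_eq_sum[OF assms(1) \<open>finite W\<close> \<open>verts E \<subseteq> W\<close>] by simp
  then show ?thesis using sum_degree_off_two_hubs_le[OF assms(1,2)] unfolding R_def B_def m_def by linarith
qed

lemma two_line_graph_edges_le_one_hub:
  assumes "simple_graph E" "\<And>v. v \<noteq> x \<Longrightarrow> degree E v \<le> 3"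
  shows "2 * line_graph_edges E \<le> degree E x * (degree E x - 1) + 2 * (2 * card E - degree E x)"
proof -
  define W where "W = insert x (verts E)"
  have "finite W" unfolding W_def using finite_verts[OF assms(1)] by simp
  have W: "verts E \<subseteq> W" "x \<in> W" unfolding W_def by auto
  have "(\<Sum>v\<in>W - {x}. degree E v * (degree E v - 1)) \<le> (\<Sum>v\<in>W - {x}. 2 * degree E v)"
  proof (rule sum_mono)
    fix v assume "v \<in> W - {x}"
    then have "degree E v - 1 \<le> 2" using assms(2) by fastforce
    then show "degree E v * (degree E v - 1) \<le> 2 * degree E v" by (simp add: mult.commute)
  qed
  also have "\<dots> = 2 * (2 * card E - degree E x)"
    using sum_degree_eq[OF assms(1) \<open>finite W\<close> W(1)] sum.remove[OF \<open>finite W\<close> W(2), of "degree E"]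
    by (simp add: sum_distrib_left[symmetric])
  finally show ?thesis
    using two_line_graph_edges_eq_sum[OF assms(1) \<open>finite W\<close> W(1)]
      sum.remove[OF \<open>finite W\<close> W(2), of "\<lambda>v. degree E v * (degree E v - 1)"] by simp
qed

lemma line_graph_edges_le_if_max_degree_half:
  assumes "simple_graph E" "card E = 2 * k" "max_degree E = k" "3 \<le> k"
  shows "line_graph_edges E \<le> k\<^sup>2 + 3"
proof -
  have "E \<noteq> {}" using assms(2,4) by auto
  then obtain x where x: "degree E x = k" using max_degree_attained assms(1,3) by metis
  have le_k: "degree E v \<le> k" for v using degree_le_max_degree[OF assms(1)] assms(3) by simp
  have "2 * line_graph_edges E \<le> 2 * k\<^sup>2 + 6"
  proof (cases "\<exists>y. y \<noteq> x \<and> 4 \<le> degree E y")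
    case True
    then obtain y where "x \<noteq> y" "4 \<le> degree E y" by metis
    let ?m = "card {e\<in>E. x \<in> e \<and> y \<in> e}"
    let ?s = "card {e\<in>E. x \<notin> e \<and> y \<notin> e}"
    have "?s + degree E y = k + ?m"
      using card_edges_avoiding_both[OF simple_graph_finite[OF assms(1)], of x y] x assms(2) by simp
    then have "k * (k - 1) + degree E y * (degree E y - 1) + 2 * (degree E y - ?m) + ?s * (?s - 1) + 8 * ?s
        \<le> 2 * k\<^sup>2 + 6"
      using \<open>4 \<le> degree E y\<close> le_k card_edges_joining_le_1[OF assms(1) \<open>x \<noteq> y\<close>]
      by (intro two_hub_arith)
    with two_line_graph_edges_le_two_hubs[OF assms(1) \<open>x \<noteq> y\<close>] show ?thesis
      unfolding x by (rule order_trans)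
  next
    case False
    then have "degree E v \<le> 3" if "v \<noteq> x" for v using that by force
    from two_line_graph_edges_le_one_hub[of E x, OF assms(1) this] show ?thesis
      using one_hub_arith[OF assms(4)] unfolding x assms(2) by simp
  qed
  then show ?thesis by simp
qed

definition book_graph :: "nat \<Rightarrow> nat \<Rightarrow> nat set set" where
  "book_graph a b = insert {0, 1} ((\<lambda>i. {0, i}) ` {2..a} \<union> (\<lambda>i. {1, i}) ` {2..b})"

lemma simple_graph_book_graph: "simple_graph (book_graph a b)"
  unfolding simple_graph_def book_graph_def by auto

lemma doubleton_notin_book_graph: "2 \<le> u \<Longrightarrow> 2 \<le> w \<Longrightarrow> {u, w} \<notin> book_graph a b"
  unfolding book_graph_def by (auto simp: doubleton_eq_iff)

lemma inj_on_doubleton: "inj_on (\<lambda>i. {c, i}) A"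
  by (auto simp: inj_on_def doubleton_eq_iff)

lemma card_book_graph:
  assumes "1 \<le> a" "1 \<le> b"
  shows "card (book_graph a b) = a + b - 1"
proof -
  have "(\<lambda>i. {0, i}) ` {2..a} \<inter> (\<lambda>i. {1, i}) ` {2..b} = {}"
    by force
  then have "card ((\<lambda>i. {0, i}) ` {2..a} \<union> (\<lambda>i. {1, i}) ` {2..b}) = (a - 1) + (b - 1)"
    by (simp add: card_Un_disjoint card_image inj_on_doubleton)
  moreover have "{0, 1} \<notin> (\<lambda>i. {0, i}) ` {2..a} \<union> (\<lambda>i. {1, i}) ` {2..b}"
    by (simp add: image_iff doubleton_eq_iff)
  ultimately show ?thesis unfolding book_graph_def using assms by simp
qed

lemma degree_book_graph_0:
  assumes "1 \<le> a"
  shows "degree (book_graph a b) 0 = a"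
proof -
  have "{e \<in> book_graph a b. 0 \<in> e} = insert {0, 1} ((\<lambda>i. {0, i}) ` {2..a})"
    unfolding book_graph_def by force
  moreover have "{0, 1} \<notin> (\<lambda>i. {0, i}) ` {2..a}" by (simp add: image_iff doubleton_eq_iff)
  ultimately show ?thesis unfolding degree_def using assms by (simp add: card_image inj_on_doubleton)
qed

lemma degree_book_graph_1:
  assumes "1 \<le> b"
  shows "degree (book_graph a b) 1 = b"
proof -
  have "{e \<in> book_graph a b. 1 \<in> e} = insert {0, 1} ((\<lambda>i. {1, i}) ` {2..b})"
    unfolding book_graph_def by force
  moreover have "{0, 1} \<notin> (\<lambda>i. {1, i}) ` {2..b}" by (simp add: image_iff doubleton_eq_iff)
  ultimately show ?thesis unfolding degree_def using assms by (simp add: card_image inj_on_doubleton)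
qed

lemma degree_book_graph_page:
  assumes "2 \<le> v"
  shows "degree (book_graph a b) v = of_bool (v \<le> a) + of_bool (v \<le> b)"
proof -
  have "{e \<in> book_graph a b. v \<in> e}
      = (if v \<le> a then {{0, v}} else {}) \<union> (if v \<le> b then {{1, v}} else {})"
    unfolding book_graph_def using assms by force
  moreover have "{0, v} \<noteq> {1, v}" using assms by (simp add: doubleton_eq_iff)
  ultimately show ?thesis unfolding degree_def by simp
qed

lemma admissible_book_graph:
  assumes "2 \<le> b" "b \<le> a"
  shows "admissible (a + b - 1) a (book_graph a b)"
proof -
  have "degree (book_graph a b) v \<le> a" for v
  proof -
    have "v = 0 \<or> v = 1 \<or> 2 \<le> v" by linarith
    then show ?thesis
      using assms degree_book_graph_0[of a b] degree_book_graph_1[of b a] degree_book_graph_page[of v a b]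
      by auto
  qed
  then have "max_degree (book_graph a b) = a"
    using assms by (intro max_degree_eqI[OF simple_graph_book_graph degree_book_graph_0]) simp_all
  moreover have "book_graph a b \<noteq> {}" unfolding book_graph_def by simp
  ultimately show ?thesis
    unfolding admissible_def using assms card_book_graph[of a b] simple_graph_book_graph min_degree_ge_1
    by simp
qed

lemma two_line_graph_edges_book_graph_ge:
  assumes "1 \<le> b" "b \<le> a"
  shows "a * (a - 1) + b * (b - 1) + 2 * (b - 1) \<le> 2 * line_graph_edges (book_graph a b)"
proof -
  let ?d = "degree (book_graph a b)"
  have "(\<Sum>v\<in>{2..b}. ?d v * (?d v - 1)) = (\<Sum>v\<in>{2..b}. 2)"
    by (rule sum.cong) (use assms in \<open>simp_all add: degree_book_graph_page\<close>)
  then have "(\<Sum>v\<in>{0, 1} \<union> {2..b}. ?d v * (?d v - 1)) = a * (a - 1) + b * (b - 1) + 2 * (b - 1)"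
    using assms degree_book_graph_0[of a b] degree_book_graph_1[of b a] by (simp add: sum.union_disjoint)
  then show ?thesis
    using sum_degree_le_two_line_graph_edges[OF simple_graph_book_graph, of "{0, 1} \<union> {2..b}" a b]
    by simp
qed

lemma degree_book_graph_with_chord:
  assumes "3 \<le> k"
  shows "degree (insert {2, 3} (book_graph k k)) v
       = (if v \<le> 1 then k else if v \<le> 3 then 3 else if v \<le> k then 2 else 0)"
proof -
  have "degree (insert {2, 3} (book_graph k k)) v = degree (book_graph k k) v + of_bool (v \<in> {2, 3})"
    by (rule degree_insert) (simp_all add: doubleton_notin_book_graph simple_graph_finite[OF simple_graph_book_graph])
  moreover have "v = 0 \<or> v = 1 \<or> 2 \<le> v" by linarith
  ultimately show ?thesis
    using assms degree_book_graph_0[of k k] degree_book_graph_1[of k k] degree_book_graph_page[of v k k]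
    by auto
qed

lemma admissible_book_graph_with_chord:
  assumes "3 \<le> k"
  shows "admissible (2 * k) k (insert {2, 3} (book_graph k k))"
proof -
  have simple: "simple_graph (insert {2, 3} (book_graph k k))"
    by (simp add: simple_graph_insert simple_graph_book_graph)
  have "card (insert {2, 3} (book_graph k k)) = 2 * k"
    using assms card_book_graph[of k k] simple_graph_finite[OF simple_graph_book_graph]
    by (simp add: doubleton_notin_book_graph)
  moreover have "max_degree (insert {2, 3} (book_graph k k)) = k"
    by (rule max_degree_eqI[OF simple, of 0]) (use assms in \<open>simp_all add: degree_book_graph_with_chord\<close>)
  ultimately show ?thesis
    unfolding admissible_def using simple min_degree_ge_1 by blast
qed

lemma line_graph_edges_book_graph_with_chord:
  assumes "3 \<le> k"
  shows "k\<^sup>2 + 3 \<le> line_graph_edges (insert {2, 3} (book_graph k k))"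
proof -
  let ?d = "degree (insert {2, 3} (book_graph k k))"
  have "(\<Sum>v\<in>{4..k}. ?d v * (?d v - 1)) = (\<Sum>v\<in>{4..k}. 2)"
    by (rule sum.cong) (simp_all add: degree_book_graph_with_chord[OF assms])
  moreover have "{0..k} = {0, 1, 2, 3} \<union> {4..k}" using assms by auto
  ultimately have "(\<Sum>v\<in>{0..k}. ?d v * (?d v - 1)) = 2 * k * (k - 1) + 12 + 2 * (k - 3)"
    by (simp add: sum.union_disjoint degree_book_graph_with_chord[OF assms])
  also have "\<dots> = 2 * (k\<^sup>2 + 3)"
    using assms by (auto simp: power2_eq_square algebra_simps dest!: le_Suc_ex)
  finally show ?thesis
    using sum_degree_le_two_line_graph_edges[OF simple_graph_insert[OF simple_graph_book_graph],
        of "{2, 3}" "{0..k}" k k]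
    by simp
qed

theorem f_max_degree_half:
  assumes "3 \<le> k"
  shows "f (2 * k) k = k\<^sup>2 + 3"
proof (rule antisym)
  show "f (2 * k) k \<le> k\<^sup>2 + 3"
    using admissible_book_graph_with_chord[OF assms]
    by (rule f_le) (use line_graph_edges_le_if_max_degree_half assms in \<open>auto simp: admissible_def\<close>)
  show "k\<^sup>2 + 3 \<le> f (2 * k) k"
    using line_graph_edges_book_graph_with_chord[OF assms]
      line_graph_edges_le_f[OF admissible_book_graph_with_chord[OF assms]] by (rule order_trans)
qed

theorem f_max_degree_half_less:
  assumes "5 \<le> k"
  shows "f (2 * k) k < f (2 * k) (k + 1)"
proof -
  have "2 * (k\<^sup>2 + 3) < (k + 1) * k + k * (k - 1) + 2 * (k - 1)"
    using assms by (auto simp: power2_eq_square algebra_simps dest!: le_Suc_ex)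
  also have "\<dots> \<le> 2 * line_graph_edges (book_graph (k + 1) k)"
    using two_line_graph_edges_book_graph_ge[of k "k + 1"] assms by simp
  finally have "k\<^sup>2 + 3 < line_graph_edges (book_graph (k + 1) k)" by simp
  also have "\<dots> \<le> f (2 * k) (k + 1)"
    using admissible_book_graph[of k "k + 1"] assms by (intro line_graph_edges_le_f) (simp add: mult_2)
  finally show ?thesis using f_max_degree_half[of k] assms by simp
qed

theorem mainTheorem14:
  fixes N :: nat
  assumes "even N"
  shows "(N \<ge> 6 \<longrightarrow> 4 * f N (N div 2) = N^2 + 12)
       \<and> (N \<ge> 10 \<longrightarrow> f N (N div 2 + 1) > f N (N div 2))"
proof -
  obtain k where N: "N = 2 * k" using assms by blast
  then have "N div 2 = k" by simp
  then show ?thesis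
    using f_max_degree_half[of k] f_max_degree_half_less[of k]
    unfolding N by (simp add: power2_eq_square)
qed

end
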